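(* Let $Y$ be a discrete random variable taking values in a set $\mathcal{Y}$, and let $B=(B_0,\dots,B_{m-1})$ be a binary random vector taking values in $\{0,1\}^m$, defined on the same probability space. Suppose that $\mathbf{H}(Y\mid B)=0$ and that the components of $B$ are independent conditionally on $Y$, i.e. $P(B=b\mid Y=y)=\prod_{i=0}^{m-1}P(B_i=b_i\mid Y=y)$ for all $b\in\{0,1\}^m$ and all $y$ with $P(Y=y)>0$. Then for every class $y_n\in\mathcal{Y}$ with $P(Y=y_n)>0$ there exists a vector $\mu^{(n)}\in\mathbb{R}^{m+1}$ such that for every $b\in\{0,1\}^m$ with $P(B=b)\neq 0$, \[ (b_0,\dots,b_{m-1},1)\cdot\mu^{(n)}>0 \iff P(Y=y_n\mid B=b)=1 . \]
   Context: $\mathbf{H}(Y\mid B)$ denotes the conditional Shannon entropy of $Y$ given $B$; the condition $\mathbf{H}(Y\mid B)=0$ means $Y$ is almost surely a function of $B$. The dot denotes the standard inner product on $\mathbb{R}^{m+1}$. *)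

theory Defs
  imports "HOL-Probability.Probability"
begin

text \<open>Elementary conditional probability P(A | C) = P(A \<inter> C) / P(C)
  (equal to 0 when P(C) = 0, by the convention x / 0 = 0).\<close>
definition cprob :: "'a measure \<Rightarrow> 'a set \<Rightarrow> 'a set \<Rightarrow> real" where
  "cprob M A C = measure M (A \<inter> C) / measure M C"

definition binvecs :: "nat \<Rightarrow> real list set" where
  "binvecs m = {b. length b = m \<and> set b \<subseteq> {0, 1}}"

definition aug_dot :: "real list \<Rightarrow> real list \<Rightarrow> real" where
  "aug_dot b mu = (\<Sum>i<length b. b ! i * mu ! i) + mu ! length b"

end

theory Submission
  imports Defs
begin

text \<open>Since the components of \<open>B\<close> are conditionally independent, \<open>P(Y = y, B = b) > 0\<close> holds
  exactly when every coordinate value \<open>b\<^sub>i\<close> has positive probability given \<open>Y = y\<close>.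
  Giving each coordinate value a score \<open>0\<close> if it is possible and \<open>-1\<close> otherwise, this is the
  statement that the total score plus \<open>1/2\<close> is positive; a score that depends on each bit
  separately is an affine function of \<open>b\<close>. Finally, as \<open>Y\<close> is a function of \<open>B\<close>, the posterior
  \<open>P(Y = y | B = b)\<close> is \<open>0\<close> or \<open>1\<close>, and it is \<open>1\<close> iff \<open>P(Y = y, B = b) > 0\<close>.\<close>

definition separable_weights :: "nat \<Rightarrow> (nat \<Rightarrow> real \<Rightarrow> real) \<Rightarrow> real \<Rightarrow> real list" where
  "separable_weights m q c = map (\<lambda>i. q i 1 - q i 0) [0..<m] @ [(\<Sum>i<m. q i 0) + c]"

lemma length_separable_weights [simp]: "length (separable_weights m q c) = m + 1"
  by (simp add: separable_weights_def)

lemma aug_dot_separable_weights: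
  assumes "b \<in> binvecs m"
  shows "aug_dot b (separable_weights m q c) = (\<Sum>i<m. q i (b ! i)) + c"
proof -
  have len: "length b = m" and bits: "\<And>i. i < m \<Longrightarrow> b ! i = 0 \<or> b ! i = 1"
    using assms nth_mem by (fastforce simp: binvecs_def)+
  have "aug_dot b (separable_weights m q c)
      = (\<Sum>i<m. b ! i * (q i 1 - q i 0)) + ((\<Sum>i<m. q i 0) + c)"
    unfolding aug_dot_def separable_weights_def len by (auto simp: nth_append intro!: sum.cong)
  also have "\<dots> = (\<Sum>i<m. b ! i * (q i 1 - q i 0) + q i 0) + c"
    by (simp add: sum.distrib)
  also have "\<dots> = (\<Sum>i<m. q i (b ! i)) + c"
    using bits by (intro arg_cong[where f = "\<lambda>t. t + c"] sum.cong) fastforce+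
  finally show ?thesis .
qed

lemma sum_zero_or_minus_one_plus_pos_iff:
  fixes q :: "nat \<Rightarrow> real"
  assumes "\<And>i. i < m \<Longrightarrow> q i = 0 \<or> q i = -1" and "0 < c" "c \<le> 1"
  shows "(\<Sum>i<m. q i) + c > 0 \<longleftrightarrow> (\<forall>i<m. q i = 0)"
proof
  assume pos: "(\<Sum>i<m. q i) + c > 0"
  show "\<forall>i<m. q i = 0"
  proof (rule ccontr)
    assume "\<not> (\<forall>i<m. q i = 0)"
    then obtain j where j: "j < m" "q j = -1" using assms(1) by blast
    have "(\<Sum>i<m. q i) = q j + (\<Sum>i\<in>{..<m} - {j}. q i)"
      using j by (simp add: sum.remove)
    also have "(\<Sum>i\<in>{..<m} - {j}. q i) \<le> 0"
      using assms(1) by (intro sum_nonpos) force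
    finally show False using pos j \<open>c \<le> 1\<close> by simp
  qed
qed (use \<open>0 < c\<close> in simp)

lemma prod_pos_iff_nonneg:
  fixes f :: "'b \<Rightarrow> 'a :: linordered_idom"
  assumes "finite A" and "\<And>a. a \<in> A \<Longrightarrow> f a \<ge> 0"
  shows "prod f A > 0 \<longleftrightarrow> (\<forall>a\<in>A. f a > 0)"
  using assms by (auto intro: prod_pos prod_nonneg simp: order_less_le prod_zero_iff)

lemma cprob_eq_1_iff_joint_pos:
  assumes "AE x in M. Y x = f (B x)" and "Y \<in> measurable M (count_space UNIV)"
    and "B \<in> measurable M (count_space UNIV)" and "measure M {x \<in> space M. B x = b} > 0"
  shows "cprob M {x \<in> space M. Y x = y} {x \<in> space M. B x = b} = 1
    \<longleftrightarrow> measure M ({x \<in> space M. Y x = y} \<inter> {x \<in> space M. B x = b}) > 0"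
proof -
  let ?Ey = "{x \<in> space M. Y x = y}" and ?Eb = "{x \<in> space M. B x = b}"
  have sets: "?Ey \<in> sets M" "?Eb \<in> sets M"
    using measurable_sets[OF assms(2), of "{y}"] measurable_sets[OF assms(3), of "{b}"]
    by (simp_all add: vimage_def Int_def conj_commute)
  have "AE x in M. x \<in> ?Ey \<inter> ?Eb \<longleftrightarrow> x \<in> (if f b = y then ?Eb else {})"
    using assms(1) by eventually_elim auto
  then have "measure M (?Ey \<inter> ?Eb) = measure M (if f b = y then ?Eb else {})"
    using sets by (intro measure_eq_AE) auto
  then show ?thesis
    using assms(4) by (auto simp: cprob_def split: if_splits)
qed

theorem theorem1:
  fixes M :: "'a measure" and Y :: "'a \<Rightarrow> 'y" and B :: "'a \<Rightarrow> real list" and m :: nat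
  assumes "prob_space M"
    and Y_meas: "Y \<in> measurable M (count_space UNIV)"
    and Y_discrete: "countable (Y ` space M)"
    and B_meas: "B \<in> measurable M (count_space UNIV)"
    and B_bin: "\<And>x. x \<in> space M \<Longrightarrow> B x \<in> binvecs m"
    and H_zero: "\<exists>f. AE x in M. Y x = f (B x)"
    and cond_indep: "\<And>b y. b \<in> binvecs m \<Longrightarrow> measure M {x \<in> space M. Y x = y} > 0 \<Longrightarrow>
        cprob M {x \<in> space M. B x = b} {x \<in> space M. Y x = y}
        = (\<Prod>i<m. cprob M {x \<in> space M. B x ! i = b ! i} {x \<in> space M. Y x = y})"
  shows "\<forall>yn. measure M {x \<in> space M. Y x = yn} > 0 \<longrightarrow>
      (\<exists>mu :: real list. length mu = m + 1 \<and>
        (\<forall>b \<in> binvecs m. measure M {x \<in> space M. B x = b} \<noteq> 0 \<longrightarrow>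
           (aug_dot b mu > 0 \<longleftrightarrow>
            cprob M {x \<in> space M. Y x = yn} {x \<in> space M. B x = b} = 1)))"
proof (intro allI impI)
  fix yn
  let ?Ey = "{x \<in> space M. Y x = yn}"
  assume Ey_pos: "measure M ?Ey > 0"
  obtain f where f: "AE x in M. Y x = f (B x)" using H_zero by blast
  define p where "p i v = cprob M {x \<in> space M. B x ! i = v} ?Ey" for i v
  define mu where "mu = separable_weights m (\<lambda>i v. if p i v > 0 then 0 else -1) (1/2)"
  have p_nonneg: "p i v \<ge> 0" for i v by (simp add: p_def cprob_def)
  have "aug_dot b mu > 0 \<longleftrightarrow> cprob M ?Ey {x \<in> space M. B x = b} = 1"
    if b: "b \<in> binvecs m" and Eb_pos: "measure M {x \<in> space M. B x = b} > 0" for b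
  proof -
    have "aug_dot b mu > 0 \<longleftrightarrow> (\<forall>i<m. p i (b ! i) > 0)"
      unfolding mu_def aug_dot_separable_weights[OF b]
      by (subst sum_zero_or_minus_one_plus_pos_iff) auto
    also have "\<dots> \<longleftrightarrow> (\<Prod>i<m. p i (b ! i)) > 0"
      using p_nonneg by (simp add: prod_pos_iff_nonneg) blast
    also have "\<dots> \<longleftrightarrow> measure M (?Ey \<inter> {x \<in> space M. B x = b}) > 0"
      using cond_indep[OF b Ey_pos, symmetric] Ey_pos
      by (simp add: p_def cprob_def Int_commute zero_less_divide_iff)
    also have "\<dots> \<longleftrightarrow> cprob M ?Ey {x \<in> space M. B x = b} = 1"
      using cprob_eq_1_iff_joint_pos[OF f Y_meas B_meas Eb_pos] by simp
    finally show ?thesis .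
  qed
  then show "\<exists>mu. length mu = m + 1 \<and> (\<forall>b \<in> binvecs m. measure M {x \<in> space M. B x = b} \<noteq> 0 \<longrightarrow>
      (aug_dot b mu > 0 \<longleftrightarrow> cprob M ?Ey {x \<in> space M. B x = b} = 1))"
    by (intro exI[of _ mu]) (simp add: mu_def order_less_le)
qed

end
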